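(* Let $\mu\in(0,1/2]$, $d=\sqrt{1-3\mu+3\mu^2}$, $\lambda_1=\tfrac32(1-d)$, $\lambda_2=\tfrac32(1+d)$, and consider the system $\ddot x-2\dot y=\Omega_x$, $\ddot y+2\dot x=\Omega_y$, $\ddot z=\Omega_z$ with $\Omega=\tfrac12(\lambda_2x^2+\lambda_1y^2-z^2)+\frac{1}{\sqrt{x^2+y^2+z^2}}$. Then all equilibrium points lie in the plane $z=0$, and there are exactly four of them: $$L_1=(\lambda_2^{-1/3},0,0),\ L_2=(-\lambda_2^{-1/3},0,0),\ L_3=(0,\lambda_1^{-1/3},0),\ L_4=(0,-\lambda_1^{-1/3},0).$$
   Context: Equilibrium points are the critical points of $\Omega$ on $\mathbb{R}^3\setminus\{0\}$ (with zero velocity). *)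

theory Defs
  imports "HOL-Analysis.Analysis"
begin

definition Omega :: "real \<Rightarrow> real \<Rightarrow> real^3 \<Rightarrow> real" where
  "Omega lam1 lam2 p =
     (lam2 * (p$1)^2 + lam1 * (p$2)^2 - (p$3)^2) / 2
     + 1 / sqrt ((p$1)^2 + (p$2)^2 + (p$3)^2)"

definition equilibrium :: "real \<Rightarrow> real \<Rightarrow> real^3 \<Rightarrow> bool" where
  "equilibrium lam1 lam2 p \<longleftrightarrow>
     p \<noteq> 0 \<and> (Omega lam1 lam2 has_derivative (\<lambda>h. 0)) (at p)"

end

theory Submission
  imports Defs
begin

text \<open>With r = |p|, the gradient of Omega at p \<noteq> 0 is
  ((lam2 - r^-3) x, (lam1 - r^-3) y, -(1 + r^-3) z).
  The last factor never vanishes, so z = 0; since lam1 \<noteq> lam2, the first two factors cannot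
  vanish simultaneously, so an equilibrium lies on the x- or y-axis, where r = |x| resp. |y|
  and the remaining equation reads |x|^3 = 1/lam2 resp. |y|^3 = 1/lam1.\<close>

lemma norm_real3: "norm (p :: real^3) = sqrt ((p$1)^2 + (p$2)^2 + (p$3)^2)"
  by (simp add: norm_vec_def L2_set_def sum_3)

lemma inner_real3: "(p :: real^3) \<bullet> h = p$1 * h$1 + p$2 * h$2 + p$3 * h$3"
  by (simp add: inner_vec_def sum_3)

lemma Omega_eq: "Omega l1 l2 p = (l2 * (p$1)^2 + l1 * (p$2)^2 - (p$3)^2) / 2 + 1 / norm p"
  by (simp add: Omega_def norm_real3)

lemma has_derivative_Omega:
  assumes "p \<noteq> 0"
  shows "(Omega l1 l2 has_derivative
           (\<lambda>h. (l2 - 1 / norm p ^ 3) * p$1 * h$1 + (l1 - 1 / norm p ^ 3) * p$2 * h$2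
                - (1 + 1 / norm p ^ 3) * p$3 * h$3)) (at p)"
proof -
  have nth: "((\<lambda>x. x$i) has_derivative (\<lambda>h. h$i)) (at p)" for i :: 3
    by (rule bounded_linear_imp_has_derivative[OF bounded_linear_vec_nth])
  have quad: "((\<lambda>x. (l2 * (x$1)^2 + l1 * (x$2)^2 - (x$3)^2) / 2) has_derivative
                (\<lambda>h. l2 * p$1 * h$1 + l1 * p$2 * h$2 - p$3 * h$3)) (at p)"
    by (rule has_derivative_eq_rhs, (rule derivative_intros nth)+) (simp_all add: fun_eq_iff)
  have recip: "((\<lambda>x. 1 / norm x) has_derivative (\<lambda>h. - (p \<bullet> h) / norm p ^ 3)) (at p)"
  proof (rule has_derivative_eq_rhs)
    show "((\<lambda>x. 1 / norm x) has_derivative (\<lambda>h. - (h \<bullet> sgn p) / norm p ^ 2)) (at p)"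
      using has_derivative_divide[OF has_derivative_const has_derivative_norm[OF assms], of 1] assms
      by (simp add: power2_eq_square field_simps)
    show "(\<lambda>h. - (h \<bullet> sgn p) / norm p ^ 2) = (\<lambda>h. - (p \<bullet> h) / norm p ^ 3)"
      using assms
      by (simp add: fun_eq_iff sgn_div_norm inner_commute power3_eq_cube power2_eq_square
          divide_inverse)
  qed
  show ?thesis
    unfolding Omega_eq[abs_def]
    by (rule has_derivative_eq_rhs, rule has_derivative_add[OF quad recip])
       (simp add: fun_eq_iff inner_real3 algebra_simps add_divide_distrib diff_divide_distrib)
qed

lemma equilibrium_iff:
  "equilibrium l1 l2 p \<longleftrightarrow> p \<noteq> 0 \<and>
     (l2 - 1 / norm p ^ 3) * p$1 = 0 \<and> (l1 - 1 / norm p ^ 3) * p$2 = 0 \<and>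
     (1 + 1 / norm p ^ 3) * p$3 = 0"
  (is "_ \<longleftrightarrow> _ \<and> ?grad0")
proof (cases "p = 0")
  case False
  let ?D = "\<lambda>h::real^3. (l2 - 1 / norm p ^ 3) * p$1 * h$1 + (l1 - 1 / norm p ^ 3) * p$2 * h$2
                - (1 + 1 / norm p ^ 3) * p$3 * h$3"
  have "(Omega l1 l2 has_derivative (\<lambda>h. 0)) (at p) \<longleftrightarrow> ?D = (\<lambda>h. 0)"
  proof
    assume "(Omega l1 l2 has_derivative (\<lambda>h. 0)) (at p)"
    then show "?D = (\<lambda>h. 0)"
      by (rule has_derivative_unique[OF has_derivative_Omega[OF False, of l1 l2]])
  qed (use has_derivative_Omega[OF False, of l1 l2] in simp)
  also have "\<dots> \<longleftrightarrow> ?grad0"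
  proof
    assume "?D = (\<lambda>h. 0)"
    from fun_cong[OF this, of "vector [1, 0, 0]"] fun_cong[OF this, of "vector [0, 1, 0]"]
      fun_cong[OF this, of "vector [0, 0, 1]"]
    show ?grad0 by simp
  next
    assume ?grad0
    then show "?D = (\<lambda>h. 0)"
      by (intro ext, elim conjE) (simp (no_asm_simp))
  qed
  finally show ?thesis
    using False by (simp add: equilibrium_def)
qed (simp add: equilibrium_def)

lemma equilibrium_third_coordinate_eq_0:
  assumes "equilibrium l1 l2 p"
  shows "p$3 = 0"
proof -
  have "1 + 1 / norm p ^ 3 > 0"
    by (simp add: add_pos_nonneg)
  then show ?thesis
    using assms by (simp add: equilibrium_iff)
qed

lemma power3_eq_inverse_iff:
  fixes c t :: real
  assumes "c > 0" and "t \<ge> 0"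
  shows "t ^ 3 = 1 / c \<longleftrightarrow> t = c powr (-1/3)"
proof -
  have "(c powr (-1/3)) ^ 3 = c powr (of_nat 3 * (-1/3))"
    using assms(1) by (simp add: powr_power)
  also have "\<dots> = 1 / c"
    using assms(1) by (simp add: powr_minus_divide)
  finally have cube: "(c powr (-1/3)) ^ 3 = 1 / c" .
  have "t ^ 3 = 1 / c \<longleftrightarrow> t ^ 3 = (c powr (-1/3)) ^ 3"
    by (simp only: cube)
  also have "\<dots> \<longleftrightarrow> t = c powr (-1/3)"
    using assms by (intro power_eq_iff_eq_base) auto
  finally show ?thesis .
qed

lemma equilibrium_on_first_axis_iff:
  assumes "l2 > 0"
  shows "equilibrium l1 l2 (vector [t, 0, 0]) \<longleftrightarrow> \<bar>t\<bar> = l2 powr (-1/3)"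
proof -
  have norm: "norm (vector [t, 0, 0] :: real^3) = \<bar>t\<bar>"
    by (simp add: norm_real3)
  have "equilibrium l1 l2 (vector [t, 0, 0]) \<longleftrightarrow> t \<noteq> 0 \<and> l2 = 1 / \<bar>t\<bar> ^ 3"
    by (auto simp: equilibrium_iff norm vec_eq_iff forall_3)
  also have "\<dots> \<longleftrightarrow> \<bar>t\<bar> ^ 3 = 1 / l2"
    using assms by (cases "t = 0") (auto simp: field_simps)
  also have "\<dots> \<longleftrightarrow> \<bar>t\<bar> = l2 powr (-1/3)"
    using assms by (simp add: power3_eq_inverse_iff)
  finally show ?thesis .
qed

lemma equilibrium_on_second_axis_iff:
  assumes "l1 > 0"
  shows "equilibrium l1 l2 (vector [0, t, 0]) \<longleftrightarrow> \<bar>t\<bar> = l1 powr (-1/3)"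
proof -
  have norm: "norm (vector [0, t, 0] :: real^3) = \<bar>t\<bar>"
    by (simp add: norm_real3)
  have "equilibrium l1 l2 (vector [0, t, 0]) \<longleftrightarrow> t \<noteq> 0 \<and> l1 = 1 / \<bar>t\<bar> ^ 3"
    by (auto simp: equilibrium_iff norm vec_eq_iff forall_3)
  also have "\<dots> \<longleftrightarrow> \<bar>t\<bar> ^ 3 = 1 / l1"
    using assms by (cases "t = 0") (auto simp: field_simps)
  also have "\<dots> \<longleftrightarrow> \<bar>t\<bar> = l1 powr (-1/3)"
    using assms by (simp add: power3_eq_inverse_iff)
  finally show ?thesis .
qed

lemma equilibrium_on_coordinate_axis:
  assumes "l1 \<noteq> l2" and "equilibrium l1 l2 p"
  shows "p = vector [p$1, 0, 0] \<or> p = vector [0, p$2, 0]"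
proof -
  have "p$3 = 0"
    using assms(2) by (rule equilibrium_third_coordinate_eq_0)
  moreover have "p$1 = 0 \<or> p$2 = 0"
    \<comment> \<open>otherwise both l1 and l2 would equal 1 / norm p ^ 3\<close>
    using assms by (auto simp: equilibrium_iff)
  ultimately show ?thesis
    by (auto simp: vec_eq_iff forall_3)
qed

lemma equilibria_eq:
  assumes "l1 > 0" and "l2 > 0" and "l1 \<noteq> l2"
  shows "{p. equilibrium l1 l2 p} =
           {vector [l2 powr (-1/3), 0, 0], vector [- (l2 powr (-1/3)), 0, 0],
            vector [0, l1 powr (-1/3), 0], vector [0, - (l1 powr (-1/3)), 0]}"
proof -
  have "equilibrium l1 l2 p \<longleftrightarrow>
          (\<exists>t. p = vector [t, 0, 0] \<and> \<bar>t\<bar> = l2 powr (-1/3)) \<or>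
          (\<exists>t. p = vector [0, t, 0] \<and> \<bar>t\<bar> = l1 powr (-1/3))" for p
    using equilibrium_on_coordinate_axis[OF assms(3), of p]
      equilibrium_on_first_axis_iff[OF assms(2)] equilibrium_on_second_axis_iff[OF assms(1)]
    by metis
  moreover have "\<bar>t\<bar> = c \<longleftrightarrow> t = c \<or> t = - c" if "c > 0" for t c :: real
    using that by auto
  ultimately show ?thesis
    using assms(1,2) by auto
qed

lemma card_axis_points:
  assumes "a \<noteq> 0" and "b \<noteq> 0"
  shows "card {vector [a, 0, 0], vector [- a, 0, 0],
               vector [0, b, 0], vector [0, - b, 0] :: real^3} = 4"
  using assms by (simp add: vec_eq_iff forall_3)

lemma sqrt_1_minus_3mu_plus_3mu2_bounds:
  fixes \<mu> :: real
  assumes "0 < \<mu>" and "\<mu> < 1"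
  shows "0 < sqrt (1 - 3*\<mu> + 3*\<mu>^2)" and "sqrt (1 - 3*\<mu> + 3*\<mu>^2) < 1"
proof -
  have "1 - 3*\<mu> + 3*\<mu>^2 = 3 * (\<mu> - 1/2)^2 + 1/4"
    by (simp add: power2_eq_square algebra_simps)
  then show "0 < sqrt (1 - 3*\<mu> + 3*\<mu>^2)"
    by (simp add: add_nonneg_pos)
  have "0 < \<mu> * (1 - \<mu>)"
    using assms by simp
  then show "sqrt (1 - 3*\<mu> + 3*\<mu>^2) < 1"
    by (simp add: power2_eq_square algebra_simps)
qed

theorem mainTheorem3:
  fixes \<mu> d lam1 lam2 :: real
  assumes "0 < \<mu>" and "\<mu> \<le> 1/2"
    and "d = sqrt (1 - 3*\<mu> + 3*\<mu>^2)"
    and "lam1 = 3/2 * (1 - d)" and "lam2 = 3/2 * (1 + d)"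
  shows "(\<forall>p. equilibrium lam1 lam2 p \<longrightarrow> p$3 = 0)
    \<and> {p. equilibrium lam1 lam2 p} =
        {vector [lam2 powr (-1/3), 0, 0], vector [- (lam2 powr (-1/3)), 0, 0],
         vector [0, lam1 powr (-1/3), 0], vector [0, - (lam1 powr (-1/3)), 0]}
    \<and> card {p. equilibrium lam1 lam2 p} = 4"
proof -
  have "0 < d" and "d < 1"
    using sqrt_1_minus_3mu_plus_3mu2_bounds[of \<mu>] assms(1-3) by auto
  then have "0 < lam1" and "0 < lam2" and "lam1 \<noteq> lam2"
    using assms(4,5) by auto
  then show ?thesis
    using equilibrium_third_coordinate_eq_0 equilibria_eq card_axis_points by simp
qed

end
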